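(* Let $\varphi$ be a formula not containing $\sim$ that is valid in the logic of Here-and-There (HT). Then for any ${\cal X}_5$ formula $\alpha$ and any atom $p$, the formula $\varphi[\alpha/p]$ is valid in ${\cal X}_5$.
   Context: Fix a set $\mathit{At}$ of atoms. Formulas: $\varphi ::= p\mid\bot\mid\varphi\wedge\varphi\mid\varphi\vee\varphi\mid\varphi\to\varphi\mid\sim\varphi$ ($p\in\mathit{At}$); abbreviations $\neg\varphi:=\varphi\to\bot$, $\top:=\neg\bot$. $\varphi[\alpha/p]$ replaces every occurrence of $p$ in $\varphi$ by $\alpha$. HT: for a $\sim$-free formula and sets of atoms $H\subseteq T\subseteq\mathit{At}$: $\langle H,T\rangle\not\models\bot$; $\models p$ iff $p\in H$; $\wedge,\vee$ as usual; $\langle H,T\rangle\models\varphi\to\psi$ iff (i) $\langle H,T\rangle\not\models\varphi$ or $\langle H,T\rangle\models\psi$ and (ii) $\langle T,T\rangle\not\models\varphi$ or $\langle T,T\rangle\models\psi$. A $\sim$-free formula is HT valid if satisfied by every such pair. ${\cal X}_5$: an explicit literal is $p$ or $\sim p$; a set of explicit literals is consistent if it never contains both $p$ and $\sim p$. An ${\cal X}_5$-interpretation is a pair $\langle H,T\rangle$ of consistent sets of explicit literals with $H\subseteq T$. Satisfaction $\models$ and falsification $=\!\!|\;$: $\langle H,T\rangle\not\models\bot$, $\langle H,T\rangle=\!\!|\;\bot$; $\models p$ iff $p\in H$, $=\!\!|\;p$ iff $\sim p\in H$; $\models\varphi\wedge\psi$ iff both satisfied, $=\!\!|\;\varphi\wedge\psi$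 iff at least one falsified; $\models\varphi\vee\psi$ iff at least one satisfied, $=\!\!|\;\varphi\vee\psi$ iff both falsified; $\models\sim\varphi$ iff $=\!\!|\;\varphi$, $=\!\!|\;\sim\varphi$ iff $\models\varphi$; $\langle H,T\rangle\models\varphi\to\psi$ iff (i) and (ii) as in HT; $\langle H,T\rangle=\!\!|\;\varphi\to\psi$ iff $\langle T,T\rangle\models\varphi$ and $\langle H,T\rangle=\!\!|\;\psi$. A formula is ${\cal X}_5$ valid if satisfied by every ${\cal X}_5$-interpretation. *)

theory Defs
  imports Main
begin

text \<open>Formulas over atoms of type 'a; SNeg is strong negation (written ~ in the paper).\<close>
datatype 'a form =
    Atom 'a
  | Bot
  | Conj "'a form" "'a form"
  | Disj "'a form" "'a form"
  | Impl "'a form" "'a form"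
  | SNeg "'a form"

definition Neg :: "'a form \<Rightarrow> 'a form" where "Neg f = Impl f Bot"
definition Top :: "'a form" where "Top = Neg Bot"

fun snfree :: "'a form \<Rightarrow> bool" where
  "snfree (Atom p) = True"
| "snfree Bot = True"
| "snfree (Conj f g) = (snfree f \<and> snfree g)"
| "snfree (Disj f g) = (snfree f \<and> snfree g)"
| "snfree (Impl f g) = (snfree f \<and> snfree g)"
| "snfree (SNeg f) = False"

fun subst :: "'a form \<Rightarrow> 'a form \<Rightarrow> 'a \<Rightarrow> 'a form" where
  "subst (Atom q) a p = (if q = p then a else Atom q)"
| "subst Bot a p = Bot"
| "subst (Conj f g) a p = Conj (subst f a p) (subst g a p)"
| "subst (Disj f g) a p = Disj (subst f a p) (subst g a p)"
| "subst (Impl f g) a p = Impl (subst f a p) (subst g a p)"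
| "subst (SNeg f) a p = SNeg (subst f a p)"

text \<open>HT satisfaction for ~-free formulas (SNeg is never satisfied; irrelevant for ~-free formulas).\<close>
fun ht_sat :: "'a set \<Rightarrow> 'a set \<Rightarrow> 'a form \<Rightarrow> bool" where
  "ht_sat H T (Atom p) = (p \<in> H)"
| "ht_sat H T Bot = False"
| "ht_sat H T (Conj f g) = (ht_sat H T f \<and> ht_sat H T g)"
| "ht_sat H T (Disj f g) = (ht_sat H T f \<or> ht_sat H T g)"
| "ht_sat H T (Impl f g) =
     ((\<not> ht_sat H T f \<or> ht_sat H T g) \<and> (\<not> ht_sat T T f \<or> ht_sat T T g))"
| "ht_sat H T (SNeg f) = False"

definition ht_valid :: "'a form \<Rightarrow> bool" where
  "ht_valid f = (\<forall>H T. H \<subseteq> T \<longrightarrow> ht_sat H T f)"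

text \<open>Explicit literals: (p, True) is p, (p, False) is ~p.\<close>
type_synonym 'a lit = "'a \<times> bool"

definition consistent :: "'a lit set \<Rightarrow> bool" where
  "consistent S = (\<forall>p. \<not> ((p, True) \<in> S \<and> (p, False) \<in> S))"

fun x5_sat :: "'a lit set \<Rightarrow> 'a lit set \<Rightarrow> 'a form \<Rightarrow> bool"
and x5_fal :: "'a lit set \<Rightarrow> 'a lit set \<Rightarrow> 'a form \<Rightarrow> bool" where
  "x5_sat H T (Atom p) = ((p, True) \<in> H)"
| "x5_sat H T Bot = False"
| "x5_sat H T (Conj f g) = (x5_sat H T f \<and> x5_sat H T g)"
| "x5_sat H T (Disj f g) = (x5_sat H T f \<or> x5_sat H T g)"
| "x5_sat H T (Impl f g) =
     ((\<not> x5_sat H T f \<or> x5_sat H T g) \<and> (\<not> x5_sat T T f \<or> x5_sat T T g))"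
| "x5_sat H T (SNeg f) = x5_fal H T f"
| "x5_fal H T (Atom p) = ((p, False) \<in> H)"
| "x5_fal H T Bot = True"
| "x5_fal H T (Conj f g) = (x5_fal H T f \<or> x5_fal H T g)"
| "x5_fal H T (Disj f g) = (x5_fal H T f \<and> x5_fal H T g)"
| "x5_fal H T (Impl f g) = (x5_sat T T f \<and> x5_fal H T g)"
| "x5_fal H T (SNeg f) = x5_sat H T f"

definition x5_interp :: "'a lit set \<Rightarrow> 'a lit set \<Rightarrow> bool" where
  "x5_interp H T = (consistent H \<and> consistent T \<and> H \<subseteq> T)"

definition x5_valid :: "'a form \<Rightarrow> bool" where
  "x5_valid f = (\<forall>H T. x5_interp H T \<longrightarrow> x5_sat H T f)"

end

theory Submission
  imports Defs
begin

text \<open>Since \<open>\<phi>\<close> is \<open>\<sim>\<close>-free, strong negation never occurs outside the substituted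
  copies of \<open>\<alpha>\<close>, so satisfaction of \<open>\<phi>[\<alpha>/p]\<close> at an X5-interpretation \<open>\<langle>H,T\<rangle>\<close> is
  HT satisfaction of \<open>\<phi>\<close> at the pair of atom sets satisfied by the instances \<open>q[\<alpha>/p]\<close> at
  \<open>\<langle>H,T\<rangle>\<close> and at \<open>\<langle>T,T\<rangle>\<close>. Persistence of X5 makes this pair an HT-interpretation.\<close>

lemma x5_persistent:
  assumes "H \<subseteq> T"
  shows "(x5_sat H T f \<longrightarrow> x5_sat T T f) \<and> (x5_fal H T f \<longrightarrow> x5_fal T T f)"
  using assms by (induction f) auto

definition subst_world :: "'a lit set \<Rightarrow> 'a lit set \<Rightarrow> 'a form \<Rightarrow> 'a \<Rightarrow> 'a set" where
  "subst_world H T \<alpha> p = {q. x5_sat H T (subst (Atom q) \<alpha> p)}"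

lemma subst_world_mono:
  "H \<subseteq> T \<Longrightarrow> subst_world H T \<alpha> p \<subseteq> subst_world T T \<alpha> p"
  unfolding subst_world_def using x5_persistent by blast

lemma x5_sat_subst_iff_ht_sat:
  assumes "snfree \<phi>"
  shows "x5_sat H T (subst \<phi> \<alpha> p) = ht_sat (subst_world H T \<alpha> p) (subst_world T T \<alpha> p) \<phi>"
  using assms by (induction \<phi> arbitrary: H) (auto simp: subst_world_def)

theorem theorem1:
  fixes \<phi> \<alpha> :: "'a form" and p :: 'a
  assumes "snfree \<phi>" and "ht_valid \<phi>"
  shows "x5_valid (subst \<phi> \<alpha> p)"
  unfolding x5_valid_def
proof (intro allI impI)
  fix H T :: "'a lit set"
  assume "x5_interp H T"
  then have "subst_world H T \<alpha> p \<subseteq> subst_world T T \<alpha> p"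
    by (simp add: x5_interp_def subst_world_mono)
  with \<open>ht_valid \<phi>\<close> have "ht_sat (subst_world H T \<alpha> p) (subst_world T T \<alpha> p) \<phi>"
    by (simp add: ht_valid_def)
  then show "x5_sat H T (subst \<phi> \<alpha> p)"
    by (simp add: x5_sat_subst_iff_ht_sat[OF \<open>snfree \<phi>\<close>])
qed

end
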